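(* Let $P\ll Q$ be probability measures, $E$ measurable, $q:=Q(E)$, and $V:=\mathrm{VC}(P\Vert Q)$. Then $$P(E)\le\frac{V(1-q)+2q+\sqrt{V\big(V+8q(1-q)\big)}}{V+2}.$$
   Context: The Vincze–Le Cam divergence is the $f$-divergence $\mathrm{VC}(P\Vert Q):=D_f(P\Vert Q)=\int f(\mathrm dP/\mathrm dQ)\,\mathrm dQ$ with $f(t)=\frac{2-2t}{t+1}$ (equivalently $\int\frac{(\mathrm dP/\mathrm dQ-1)^2}{\mathrm dP/\mathrm dQ+1}\,\mathrm dQ$). *)

theory Defs
  imports "HOL-Probability.Probability"
begin

definition f_divergence :: "(real \<Rightarrow> real) \<Rightarrow> 'a measure \<Rightarrow> 'a measure \<Rightarrow> real" where
  "f_divergence f P Q = (\<integral>x. f (enn2real (RN_deriv Q P x)) \<partial>Q)"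

definition VC_divergence :: "'a measure \<Rightarrow> 'a measure \<Rightarrow> real" where
  "VC_divergence P Q = f_divergence (\<lambda>t. (2 - 2 * t) / (t + 1)) P Q"

end

theory Submission
  imports Defs
begin

(* The VC integrand satisfies f t + 2 = 4 / (t + 1), a convex function of t.  Jensen's inequality
   on E and on its complement (data processing for the partition {E, E^c}) shows that V dominates
   the VC divergence of the two-point distributions (p, 1 - p) and (q, 1 - q), where p = P(E):
     V + 2 >= 4 q^2 / (p + q) + 4 (1 - q)^2 / (2 - p - q),  i.e.  V (p + q) (2 - p - q) >= 2 (p - q)^2.
   This is a quadratic inequality in p, and the claimed bound is its larger root. *)

lemma tangent_le_four_div_add_one:
  fixes t c :: real
  assumes "0 \<le> t" "0 \<le> c"
  shows "4 * (2 * c + 1 - t) / (c + 1)^2 \<le> 4 / (t + 1)"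
proof -
  have "(2 * c + 1 - t) * (t + 1) = (c + 1)^2 - (c - t)^2"
    by algebra
  then have "(2 * c + 1 - t) * (t + 1) \<le> (c + 1)^2"
    by simp
  with assms show ?thesis
    by (simp add: field_simps)
qed

lemma (in finite_measure) integrable_four_div_add_one:
  fixes g :: "'a \<Rightarrow> real"
  assumes "g \<in> borel_measurable M" "\<And>x. x \<in> space M \<Longrightarrow> 0 \<le> g x"
  shows "integrable M (\<lambda>x. 4 / (g x + 1))"
proof (rule integrable_const_bound[where B = 4])
  show "AE x in M. norm (4 / (g x + 1)) \<le> 4"
    using assms(2) by (intro AE_I2) (simp add: divide_le_eq)
qed (use assms(1) in measurable)

lemma (in finite_measure) set_integral_four_div_add_one_ge:
  fixes g :: "'a \<Rightarrow> real"
  assumes A: "A \<in> sets M"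
    and g: "g \<in> borel_measurable M" "\<And>x. x \<in> space M \<Longrightarrow> 0 \<le> g x"
    and g_int: "set_integrable M A g"
  shows "4 * (measure M A)^2 / ((LINT x:A|M. g x) + measure M A) \<le> (LINT x:A|M. 4 / (g x + 1))"
proof -
  define a where "a = measure M A"
  define m where "m = (LINT x:A|M. g x)"
  have A_space: "x \<in> A \<Longrightarrow> x \<in> space M" for x
    using A sets.sets_into_space by blast
  have rhs_nonneg: "0 \<le> (LINT x:A|M. 4 / (g x + 1))"
    using g(2) A_space unfolding set_lebesgue_integral_def
    by (intro Bochner_Integration.integral_nonneg) (auto simp: indicator_def)
  have "0 \<le> m"
    using g(2) A_space unfolding m_def set_lebesgue_integral_def
    by (intro Bochner_Integration.integral_nonneg) (auto simp: indicator_def)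
  show ?thesis
  proof (cases "a = 0")
    case True
    with rhs_nonneg show ?thesis
      by (simp add: a_def)
  next
    case False
    then have "0 < a"
      by (simp add: a_def order_less_le)
    \<comment> \<open>Jensen for the convex map t \<mapsto> 4 / (t + 1): integrate its tangent at the mean c.\<close>
    define c where "c = m / a"
    have "0 \<le> c"
      using \<open>0 \<le> m\<close> \<open>0 < a\<close> by (simp add: c_def)
    define k where "k = 4 / (c + 1)^2"
    have const_int: "set_integrable M A (\<lambda>_. k * (2 * c + 1))"
      using A by (simp add: set_integrable_def integrable_real_indicator less_top[symmetric])
    have c_succ: "c + 1 = (m + a) / a" and tangent_offset: "(2 * c + 1) * a - m = m + a"
      using \<open>0 < a\<close> by (simp_all add: c_def field_simps)
    have "4 * a^2 / (m + a) = 4 / ((m + a) / a)^2 * (m + a)"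
      using \<open>0 \<le> m\<close> \<open>0 < a\<close> by (simp add: power_divide power2_eq_square)
    also have "\<dots> = k * ((2 * c + 1) * a - m)"
      unfolding k_def c_succ tangent_offset ..
    also have "\<dots> = k * (2 * c + 1) * a - k * m"
      by (simp add: algebra_simps)
    also have "\<dots> = (LINT x:A|M. k * (2 * c + 1) - k * g x)"
      using const_int g_int A by (simp add: set_integral_diff set_integral_const a_def m_def)
    also have "\<dots> \<le> (LINT x:A|M. 4 / (g x + 1))"
    proof (rule set_integral_mono)
      show "set_integrable M A (\<lambda>x. k * (2 * c + 1) - k * g x)"
        using const_int g_int by (intro set_integral_diff) auto
      show "set_integrable M A (\<lambda>x. 4 / (g x + 1))"
        using integrable_four_div_add_one[OF g] A
        unfolding set_integrable_def by (rule integrable_mult_indicator[rotated])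
      show "k * (2 * c + 1) - k * g x \<le> 4 / (g x + 1)" if "x \<in> A" for x
        using tangent_le_four_div_add_one[OF g(2)[OF A_space[OF that]] \<open>0 \<le> c\<close>]
        by (simp add: k_def right_diff_distrib[symmetric] diff_divide_distrib)
    qed
    finally show ?thesis
      by (simp add: a_def m_def)
  qed
qed

lemma (in sigma_finite_measure) set_integral_real_RN_deriv:
  assumes "finite_measure N" "absolutely_continuous M N" "sets N = sets M" "A \<in> sets M"
  shows "set_integrable M A (\<lambda>x. enn2real (RN_deriv M N x))"
    and "(LINT x:A|M. enn2real (RN_deriv M N x)) = measure N A"
proof -
  interpret N: finite_measure N by fact
  have N_sigma_finite: "sigma_finite_measure N"
    by unfold_locales
  have A_meas: "indicator A \<in> borel_measurable M"
    using assms(4) by simp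
  have "integrable N (indicator A :: 'a \<Rightarrow> real)"
    using assms(3,4) by (simp add: integrable_real_indicator less_top[symmetric])
  then show "set_integrable M A (\<lambda>x. enn2real (RN_deriv M N x))"
    using RN_deriv_integrable[OF N_sigma_finite assms(2,3) A_meas]
    by (simp add: set_integrable_def mult.commute)
  have "measure N A = integral\<^sup>L N (indicator A)"
    using assms(3,4) by simp
  also have "\<dots> = (LINT x:A|M. enn2real (RN_deriv M N x))"
    using RN_deriv_integral[OF N_sigma_finite assms(2,3) A_meas]
    by (simp add: set_lebesgue_integral_def mult.commute)
  finally show "(LINT x:A|M. enn2real (RN_deriv M N x)) = measure N A" ..
qed

lemma VC_divergence_eq_integral:
  assumes "prob_space Q"
  shows "VC_divergence P Q = (\<integral>x. 4 / (enn2real (RN_deriv Q P x) + 1) \<partial>Q) - 2"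
proof -
  interpret Q: prob_space Q by fact
  have "(2 - 2 * t) / (t + 1) = 4 / (t + 1) - 2" if "0 \<le> t" for t :: real
    using that by (simp add: field_simps)
  then have "VC_divergence P Q = (\<integral>x. 4 / (enn2real (RN_deriv Q P x) + 1) - 2 \<partial>Q)"
    unfolding VC_divergence_def f_divergence_def by simp
  also have "\<dots> = (\<integral>x. 4 / (enn2real (RN_deriv Q P x) + 1) \<partial>Q) - 2"
    using Q.integrable_four_div_add_one[of "\<lambda>x. enn2real (RN_deriv Q P x)"]
    by (simp add: Bochner_Integration.integral_diff Q.prob_space)
  finally show ?thesis .
qed

lemma VC_divergence_ge_binary:
  assumes "prob_space P" "prob_space Q" "sets P = sets Q" "absolutely_continuous Q P"
    and E: "E \<in> sets Q"
  shows "4 * (measure Q E)^2 / (measure P E + measure Q E)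
      + 4 * (1 - measure Q E)^2 / (2 - measure P E - measure Q E) \<le> VC_divergence P Q + 2"
proof -
  interpret P: prob_space P by fact
  interpret Q: prob_space Q by fact
  define g where "g = (\<lambda>x. enn2real (RN_deriv Q P x))"
  define h where "h x = 4 / (g x + 1)" for x
  define Ec where "Ec = space Q - E"
  have Ec: "Ec \<in> sets Q"
    using E by (simp add: Ec_def)
  have g: "g \<in> borel_measurable Q" "\<And>x. x \<in> space Q \<Longrightarrow> 0 \<le> g x"
    unfolding g_def by measurable
  have h_int: "set_integrable Q A h" if "A \<in> sets Q" for A
    using Q.integrable_four_div_add_one[OF g] that unfolding set_integrable_def h_def
    by (rule integrable_mult_indicator[rotated])
  have jensen: "4 * (measure Q A)^2 / (measure P A + measure Q A) \<le> (LINT x:A|Q. h x)"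
    if A: "A \<in> sets Q" for A
  proof -
    have "set_integrable Q A g" "(LINT x:A|Q. g x) = measure P A"
      using Q.set_integral_real_RN_deriv[OF P.finite_measure_axioms assms(4,3) A]
      by (simp_all add: g_def)
    with Q.set_integral_four_div_add_one_ge[OF A g(1)] g(2) show ?thesis
      by (simp add: h_def)
  qed
  have compl: "measure Q Ec = 1 - measure Q E" "measure P Ec = 1 - measure P E"
    using E P.prob_compl Q.prob_compl sets_eq_imp_space_eq[OF assms(3)] assms(3)
    by (simp_all add: Ec_def)
  have "4 * (1 - measure Q E)^2 / (2 - measure P E - measure Q E)
      = 4 * (measure Q Ec)^2 / (measure P Ec + measure Q Ec)"
    unfolding compl by (simp add: algebra_simps)
  also have "\<dots> \<le> (LINT x:Ec|Q. h x)"
    using jensen[OF Ec] .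
  finally have "4 * (1 - measure Q E)^2 / (2 - measure P E - measure Q E) \<le> (LINT x:Ec|Q. h x)" .
  moreover have "4 * (measure Q E)^2 / (measure P E + measure Q E) \<le> (LINT x:E|Q. h x)"
    using jensen[OF E] .
  moreover have "(LINT x:E|Q. h x) + (LINT x:Ec|Q. h x) = VC_divergence P Q + 2"
  proof -
    have "E \<union> Ec = space Q"
      using E sets.sets_into_space by (auto simp: Ec_def)
    then have "(LINT x:E|Q. h x) + (LINT x:Ec|Q. h x) = (LINT x:space Q|Q. h x)"
      using h_int[OF E] h_int[OF Ec] by (simp add: set_integral_Un[symmetric] Ec_def)
    also have "\<dots> = (\<integral>x. h x \<partial>Q)"
      using Q.integrable_four_div_add_one[OF g] by (simp add: set_integral_space h_def)
    finally show ?thesis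
      using VC_divergence_eq_integral[OF assms(2)] by (simp add: h_def g_def)
  qed
  ultimately show ?thesis
    by linarith
qed

lemma VC_divergence_nonneg:
  assumes "prob_space P" "prob_space Q" "sets P = sets Q" "absolutely_continuous Q P"
  shows "0 \<le> VC_divergence P Q"
  \<comment> \<open>For E = {} the binary bound reads 4 * 0 / 0 + 4 / 2 \<le> V + 2, using x / 0 = 0.\<close>
  using VC_divergence_ge_binary[OF assms, of "{}"] by simp

lemma binary_VC_bound_imp_quadratic:
  fixes V p q :: real
  assumes "0 \<le> p" "p \<le> 1" "0 \<le> q" "q \<le> 1"
    and "4 * q^2 / (p + q) + 4 * (1 - q)^2 / (2 - p - q) \<le> V + 2"
  shows "2 * (p - q)^2 \<le> V * (p + q) * (2 - p - q)"
proof (cases "p + q = 0 \<or> 2 - p - q = 0")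
  case True
  with assms(1-4) have "p = q"
    by linarith
  then show ?thesis
    using True by auto
next
  case False
  with assms(1-4) have pos: "0 < p + q" "0 < 2 - p - q"
    by linarith+
  have clear_denominators: "(a / x + b / y) * (x * y) = a * y + b * x"
    if "x \<noteq> 0" "y \<noteq> 0" for a b x y :: real
    using that by (simp add: field_simps)
  have "4 * q^2 * (2 - p - q) + 4 * (1 - q)^2 * (p + q)
      = (4 * q^2 / (p + q) + 4 * (1 - q)^2 / (2 - p - q)) * ((p + q) * (2 - p - q))"
    using pos by (simp add: clear_denominators)
  also have "\<dots> \<le> (V + 2) * ((p + q) * (2 - p - q))"
    using assms(5) pos by (intro mult_right_mono) auto
  finally have "4 * q^2 * (2 - p - q) + 4 * (1 - q)^2 * (p + q) \<le> (V + 2) * ((p + q) * (2 - p - q))" .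
  moreover have "4 * q^2 * (2 - p - q) + 4 * (1 - q)^2 * (p + q)
      = 2 * (p - q)^2 + 2 * ((p + q) * (2 - p - q))"
    by algebra
  ultimately show ?thesis
    by (simp add: algebra_simps)
qed

lemma quadratic_imp_le_larger_root:
  fixes V p q :: real
  assumes "0 \<le> V" "0 \<le> q" "q \<le> 1"
    and "2 * (p - q)^2 \<le> V * (p + q) * (2 - p - q)"
  shows "p \<le> (V * (1 - q) + 2 * q + sqrt (V * (V + 8 * q * (1 - q)))) / (V + 2)"
proof -
  define s where "s = sqrt (V * (V + 8 * q * (1 - q)))"
  have "0 \<le> s" and s_sq: "s^2 = V * (V + 8 * q * (1 - q))"
    using assms(1-3) by (auto simp: s_def)
  have "(V + 2) * p - (V * (1 - q) + 2 * q) \<le> s"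
  proof (rule power2_le_imp_le[OF _ \<open>0 \<le> s\<close>])
    have "s^2 - ((V + 2) * p - (V * (1 - q) + 2 * q))^2
        = (V + 2) * (V * (p + q) * (2 - p - q) - 2 * (p - q)^2)"
      unfolding s_sq by algebra
    moreover have "0 \<le> (V + 2) * (V * (p + q) * (2 - p - q) - 2 * (p - q)^2)"
      using assms(1,4) by simp
    ultimately show "((V + 2) * p - (V * (1 - q) + 2 * q))^2 \<le> s^2"
      by linarith
  qed
  with assms(1) show ?thesis
    unfolding s_def[symmetric] by (simp add: field_simps)
qed

theorem mainTheorem19:
  fixes P Q :: "'a measure" and E :: "'a set"
  assumes "prob_space P" and "prob_space Q"
    and "sets P = sets Q"
    and "absolutely_continuous Q P"
    and "E \<in> sets Q"
  shows "measure P E \<le>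
    (VC_divergence P Q * (1 - measure Q E) + 2 * measure Q E
      + sqrt (VC_divergence P Q * (VC_divergence P Q + 8 * measure Q E * (1 - measure Q E))))
    / (VC_divergence P Q + 2)"
proof -
  have p: "0 \<le> measure P E" "measure P E \<le> 1"
    using prob_space.prob_le_1[OF assms(1)] by simp_all
  have q: "0 \<le> measure Q E" "measure Q E \<le> 1"
    using prob_space.prob_le_1[OF assms(2)] by simp_all
  show ?thesis
    using quadratic_imp_le_larger_root[OF VC_divergence_nonneg[OF assms(1-4)] q
        binary_VC_bound_imp_quadratic[OF p q VC_divergence_ge_binary[OF assms]]] .
qed

end
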